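(* Let $A$ and $B$ be rings, $f: A\to B$ a ring homomorphism and $J$ a proper ideal of $B$ such that $J\subseteq \mathrm{nil}(B)$. Then $A\bowtie^{f}J$ is a nil-Armendariz ring if and only if $A$ is a nil-Armendariz ring.
   Context: All rings are associative with identity (not necessarily commutative), ring homomorphisms are unital, and ideals are two-sided. $\mathrm{nil}(R)$ denotes the set of nilpotent elements of a ring $R$, and $\mathrm{nil}(R)[x]$ the set of polynomials all of whose coefficients lie in $\mathrm{nil}(R)$. For a ring homomorphism $f:A\to B$ and an ideal $J$ of $B$, the amalgamation is the subring $A\bowtie^{f}J=\{(a,f(a)+j)\mid a\in A,\ j\in J\}$ of $A\times B$. A ring $R$ is nil-Armendariz if whenever $p(x)=\sum_{i=0}^n a_ix^i$ and $q(x)=\sum_{j=0}^m b_jx^j$ in $R[x]$ satisfy $p(x)q(x)\in\mathrm{nil}(R)[x]$, then $a_ib_j\in\mathrm{nil}(R)$ for all $i,j$. *)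

theory Defs
  imports Main "HOL-Library.Product_Plus"
begin

instantiation prod :: (times, times) times
begin
definition times_prod_def: "x * y = (fst x * fst y, snd x * snd y)"
instance ..
end

instantiation prod :: (one, one) one
begin
definition one_prod_def: "1 = (1, 1)"
instance ..
end

instance prod :: (ring_1, ring_1) ring_1
  by standard (auto simp: times_prod_def one_prod_def zero_prod_def plus_prod_def
      algebra_simps prod_eq_iff)

definition nilpotent_elem :: "'a::ring_1 \<Rightarrow> bool" where
  "nilpotent_elem x \<longleftrightarrow> (\<exists>n::nat. x ^ n = 0)"

text \<open>Coefficient k of the product of the polynomials sum a_i x^i (i \<le> n) and
  sum b_j x^j (j \<le> m), in a not necessarily commutative ring.\<close>
definition poly_prod_coeff ::
  "nat \<Rightarrow> nat \<Rightarrow> (nat \<Rightarrow> 'a::ring_1) \<Rightarrow> (nat \<Rightarrow> 'a) \<Rightarrow> nat \<Rightarrow> 'a" where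
  "poly_prod_coeff n m a b k =
     (\<Sum>(i, j)\<in>{(i, j). i \<le> n \<and> j \<le> m \<and> i + j = k}. a i * b j)"

text \<open>Nil-Armendariz property for a subring S of an ambient ring (the ring
  operations, hence also nilpotency, of S are those of the ambient ring).\<close>
definition nil_armendariz_on :: "'a::ring_1 set \<Rightarrow> bool" where
  "nil_armendariz_on S \<longleftrightarrow>
     (\<forall>n m (a::nat \<Rightarrow> 'a) b.
        (\<forall>i\<le>n. a i \<in> S) \<longrightarrow> (\<forall>j\<le>m. b j \<in> S) \<longrightarrow>
        (\<forall>k. nilpotent_elem (poly_prod_coeff n m a b k)) \<longrightarrow>
        (\<forall>i\<le>n. \<forall>j\<le>m. nilpotent_elem (a i * b j)))"

abbreviation nil_armendariz :: "'a::ring_1 itself \<Rightarrow> bool" where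
  "nil_armendariz _ \<equiv> nil_armendariz_on (UNIV :: 'a set)"

definition unital_ring_hom :: "('a::ring_1 \<Rightarrow> 'b::ring_1) \<Rightarrow> bool" where
  "unital_ring_hom f \<longleftrightarrow> f 1 = 1 \<and> (\<forall>x y. f (x + y) = f x + f y) \<and>
     (\<forall>x y. f (x * y) = f x * f y)"

definition two_sided_ideal :: "'b::ring_1 set \<Rightarrow> bool" where
  "two_sided_ideal J \<longleftrightarrow> 0 \<in> J \<and> (\<forall>x\<in>J. \<forall>y\<in>J. x + y \<in> J) \<and> (\<forall>x\<in>J. - x \<in> J) \<and>
     (\<forall>x\<in>J. \<forall>r. r * x \<in> J \<and> x * r \<in> J)"

definition amalgamation :: "('a::ring_1 \<Rightarrow> 'b::ring_1) \<Rightarrow> 'b set \<Rightarrow> ('a \<times> 'b) set" where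
  "amalgamation f J = {(a, f a + j) | a j. j \<in> J}"

end

theory Submission
  imports Defs
begin

text \<open>An element of the amalgamation is nilpotent iff its first component is: the second
  component is f a + j, where f a is nilpotent with a and j lies in the nil ideal J,
  and x + j stays nilpotent because (x + j)^n lies in x^n + J.  As the amalgamation also
  contains the graph of f, nil polynomial products and nilpotent coefficient products can
  be moved between A and the amalgamation in both directions.\<close>

lemma power_eq_0_mono:
  fixes x :: "'a::ring_1"
  assumes "x ^ n = 0" "n \<le> m"
  shows "x ^ m = 0"
  by (metis assms le_add_diff_inverse mult_zero_left power_add)

lemma power_prod: "(x::'a::ring_1 \<times> 'b::ring_1) ^ n = (fst x ^ n, snd x ^ n)"
  by (induction n) (auto simp: times_prod_def one_prod_def)

lemma nilpotent_elem_prod_iff: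
  "nilpotent_elem (x::'a::ring_1 \<times> 'b::ring_1) \<longleftrightarrow>
     nilpotent_elem (fst x) \<and> nilpotent_elem (snd x)"
proof
  assume "nilpotent_elem x"
  then obtain n where "x ^ n = 0" by (auto simp: nilpotent_elem_def)
  then show "nilpotent_elem (fst x) \<and> nilpotent_elem (snd x)"
    by (auto simp: nilpotent_elem_def power_prod zero_prod_def)
next
  assume "nilpotent_elem (fst x) \<and> nilpotent_elem (snd x)"
  then obtain n m where "fst x ^ n = 0" "snd x ^ m = 0" by (auto simp: nilpotent_elem_def)
  then have "fst x ^ (n + m) = 0" "snd x ^ (n + m) = 0" by (auto intro: power_eq_0_mono)
  then show "nilpotent_elem x"
    unfolding nilpotent_elem_def by (intro exI[of _ "n + m"]) (simp add: power_prod zero_prod_def)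
qed

lemma power_add_ideal:
  assumes "two_sided_ideal J" "j \<in> J"
  shows "\<exists>j'\<in>J. ((x::'a::ring_1) + j) ^ n = x ^ n + j'"
proof (induction n)
  case 0
  then show ?case using assms by (auto simp: two_sided_ideal_def)
next
  case (Suc n)
  then obtain j' where j': "j' \<in> J" "(x + j) ^ n = x ^ n + j'" by auto
  have "(x + j) ^ Suc n = (x ^ n + j') * (x + j)" by (simp only: power_Suc2 j')
  also have "\<dots> = x ^ Suc n + (x ^ n * j + j' * x + j' * j)"
    by (simp add: algebra_simps power_commutes)
  finally show ?case
    using assms j' unfolding two_sided_ideal_def by blast
qed

lemma nilpotent_elem_add_nil_ideal:
  assumes "two_sided_ideal J" "\<forall>y\<in>J. nilpotent_elem y" "j \<in> J"
    and "nilpotent_elem (x::'a::ring_1)"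
  shows "nilpotent_elem (x + j)"
proof -
  obtain n where n: "x ^ n = 0" using assms(4) by (auto simp: nilpotent_elem_def)
  obtain j' where j': "j' \<in> J" "(x + j) ^ n = j'"
    using power_add_ideal[OF assms(1,3), of x n] n by auto
  obtain k where "j' ^ k = 0" using assms(2) j' by (auto simp: nilpotent_elem_def)
  then have "(x + j) ^ (n * k) = 0" by (simp add: power_mult j')
  then show ?thesis by (auto simp: nilpotent_elem_def)
qed

lemma unital_ring_hom_add: "unital_ring_hom f \<Longrightarrow> f (x + y) = f x + f y"
  and unital_ring_hom_mult: "unital_ring_hom f \<Longrightarrow> f (x * y) = f x * f y"
  and unital_ring_hom_one: "unital_ring_hom f \<Longrightarrow> f 1 = 1"
  by (auto simp: unital_ring_hom_def)

lemma unital_ring_hom_zero: "unital_ring_hom f \<Longrightarrow> f 0 = 0"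
  using unital_ring_hom_add[of f 0 0] by simp

lemma unital_ring_hom_power: "unital_ring_hom f \<Longrightarrow> f (x ^ n) = f x ^ n"
  by (induction n) (auto simp: unital_ring_hom_one unital_ring_hom_mult)

lemma unital_ring_hom_sum: "unital_ring_hom f \<Longrightarrow> f (sum g S) = (\<Sum>s\<in>S. f (g s))"
  by (induction S rule: infinite_finite_induct)
    (auto simp: unital_ring_hom_zero unital_ring_hom_add)

lemma nilpotent_elem_hom:
  assumes "unital_ring_hom f" "nilpotent_elem x"
  shows "nilpotent_elem (f x)"
  using assms unital_ring_hom_power[OF assms(1)] unital_ring_hom_zero[OF assms(1)]
  unfolding nilpotent_elem_def by metis

lemma poly_prod_coeff_fst:
  "fst (poly_prod_coeff n m a b k) = poly_prod_coeff n m (\<lambda>i. fst (a i)) (\<lambda>j. fst (b j)) k"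
  unfolding poly_prod_coeff_def by (simp add: fst_sum times_prod_def case_prod_beta)

lemma poly_prod_coeff_snd:
  "snd (poly_prod_coeff n m a b k) = poly_prod_coeff n m (\<lambda>i. snd (a i)) (\<lambda>j. snd (b j)) k"
  unfolding poly_prod_coeff_def by (simp add: snd_sum times_prod_def case_prod_beta)

lemma poly_prod_coeff_hom:
  assumes "unital_ring_hom f"
  shows "f (poly_prod_coeff n m a b k) = poly_prod_coeff n m (\<lambda>i. f (a i)) (\<lambda>j. f (b j)) k"
  unfolding poly_prod_coeff_def
  by (simp add: unital_ring_hom_sum[OF assms] unital_ring_hom_mult[OF assms] case_prod_beta)

lemma nil_armendariz_onD:
  assumes "nil_armendariz_on S" "\<forall>i\<le>n. a i \<in> S" "\<forall>j\<le>m. b j \<in> S"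
    and "\<forall>k. nilpotent_elem (poly_prod_coeff n m a b k)" "i \<le> n" "j \<le> m"
  shows "nilpotent_elem (a i * b j)"
  using assms unfolding nil_armendariz_on_def by blast

lemma nil_armendariz_on_subset:
  "T \<subseteq> S \<Longrightarrow> nil_armendariz_on S \<Longrightarrow> nil_armendariz_on T"
  unfolding nil_armendariz_on_def by blast

lemma nil_armendariz_of_graph:
  fixes f :: "'a::ring_1 \<Rightarrow> 'b::ring_1"
  assumes hom: "unital_ring_hom f" and graph: "nil_armendariz_on (range (\<lambda>x. (x, f x)))"
  shows "nil_armendariz TYPE('a)"
  unfolding nil_armendariz_on_def
proof (intro allI impI)
  fix n m and a b :: "nat \<Rightarrow> 'a" and i j
  assume nil_coeffs: "\<forall>k. nilpotent_elem (poly_prod_coeff n m a b k)" and ij: "i \<le> n" "j \<le> m"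
  define a' where "a' = (\<lambda>i. (a i, f (a i)))"
  define b' where "b' = (\<lambda>j. (b j, f (b j)))"
  have "nilpotent_elem (poly_prod_coeff n m a' b' k)" for k
    using nil_coeffs nilpotent_elem_hom[OF hom]
    by (simp add: nilpotent_elem_prod_iff poly_prod_coeff_fst poly_prod_coeff_snd
        poly_prod_coeff_hom[OF hom, symmetric] a'_def b'_def)
  then have "nilpotent_elem (a' i * b' j)"
    by (intro nil_armendariz_onD[OF graph _ _ _ ij]) (auto simp: a'_def b'_def)
  then show "nilpotent_elem (a i * b j)"
    by (simp add: nilpotent_elem_prod_iff a'_def b'_def times_prod_def)
qed

lemma nil_armendariz_on_if_nilpotent_fst:
  fixes S :: "('a::ring_1 \<times> 'b::ring_1) set"
  assumes mult_closed: "\<And>p q. p \<in> S \<Longrightarrow> q \<in> S \<Longrightarrow> p * q \<in> S"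
    and nilpotent_iff_fst: "\<And>p. p \<in> S \<Longrightarrow> nilpotent_elem p \<longleftrightarrow> nilpotent_elem (fst p)"
    and fst_nil_armendariz: "nil_armendariz_on (fst ` S)"
  shows "nil_armendariz_on S"
  unfolding nil_armendariz_on_def
proof (intro allI impI)
  fix n m and a b :: "nat \<Rightarrow> 'a \<times> 'b" and i j
  assume a: "\<forall>i\<le>n. a i \<in> S" and b: "\<forall>j\<le>m. b j \<in> S"
    and nil_coeffs: "\<forall>k. nilpotent_elem (poly_prod_coeff n m a b k)" and ij: "i \<le> n" "j \<le> m"
  have "\<forall>k. nilpotent_elem (poly_prod_coeff n m (\<lambda>i. fst (a i)) (\<lambda>j. fst (b j)) k)"
    using nil_coeffs by (simp add: nilpotent_elem_prod_iff poly_prod_coeff_fst)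
  then have "nilpotent_elem (fst (a i) * fst (b j))"
    using a b by (intro nil_armendariz_onD[OF fst_nil_armendariz _ _ _ ij]) auto
  then show "nilpotent_elem (a i * b j)"
    using nilpotent_iff_fst mult_closed a b ij by (simp add: times_prod_def)
qed

lemma graph_subset_amalgamation:
  "two_sided_ideal J \<Longrightarrow> range (\<lambda>x. (x, f x)) \<subseteq> amalgamation f J"
  unfolding amalgamation_def two_sided_ideal_def by force

lemma amalgamation_mult_closed:
  assumes "unital_ring_hom f" "two_sided_ideal J"
    and "p \<in> amalgamation f J" "q \<in> amalgamation f J"
  shows "p * q \<in> amalgamation f J"
proof -
  obtain a j where p: "p = (a, f a + j)" "j \<in> J" using assms(3) by (auto simp: amalgamation_def)
  obtain b k where q: "q = (b, f b + k)" "k \<in> J" using assms(4) by (auto simp: amalgamation_def)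
  have "p * q = (a * b, f (a * b) + (f a * k + j * f b + j * k))"
    by (simp add: p q times_prod_def unital_ring_hom_mult[OF assms(1)] algebra_simps)
  moreover have "f a * k + j * f b + j * k \<in> J"
    using assms(2) p q unfolding two_sided_ideal_def by blast
  ultimately show ?thesis by (auto simp: amalgamation_def)
qed

lemma nilpotent_elem_amalgamation_iff:
  assumes "unital_ring_hom f" "two_sided_ideal J" "\<forall>y\<in>J. nilpotent_elem y"
    and "p \<in> amalgamation f J"
  shows "nilpotent_elem p \<longleftrightarrow> nilpotent_elem (fst p)"
proof -
  obtain a j where p: "p = (a, f a + j)" "j \<in> J" using assms(4) by (auto simp: amalgamation_def)
  show ?thesis
    using p nilpotent_elem_add_nil_ideal[OF assms(2,3) p(2) nilpotent_elem_hom[OF assms(1)]]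
    by (auto simp: nilpotent_elem_prod_iff)
qed

theorem theorem3p1:
  fixes f :: "'a::ring_1 \<Rightarrow> 'b::ring_1" and J :: "'b set"
  assumes "unital_ring_hom f"
    and "two_sided_ideal J"
    and "J \<noteq> UNIV"
    and "\<forall>x\<in>J. nilpotent_elem x"
  shows "nil_armendariz_on (amalgamation f J) \<longleftrightarrow> nil_armendariz TYPE('a)"
proof
  assume "nil_armendariz_on (amalgamation f J)"
  then show "nil_armendariz TYPE('a)"
    using nil_armendariz_of_graph[OF assms(1)] nil_armendariz_on_subset
      graph_subset_amalgamation[OF assms(2)] by blast
next
  assume "nil_armendariz TYPE('a)"
  then show "nil_armendariz_on (amalgamation f J)"
    by (intro nil_armendariz_on_if_nilpotent_fst amalgamation_mult_closed[OF assms(1,2)]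
        nilpotent_elem_amalgamation_iff[OF assms(1,2,4)])
      (auto elim: nil_armendariz_on_subset[rotated])
qed

end
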